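(* On Gauss diagrams of twisted knot diagrams, the forbidden move $F1$ can be realized by a finite sequence of moves $F2$, $T2$ and $T3$, and the forbidden move $F2$ can be realized by a finite sequence of moves $F1$, $T2$ and $T3$. Consequently, in the presence of $T2$ and $T3$, allowing $F1$ is equivalent to allowing $F2$.
   Context: A twisted knot diagram is a virtual knot diagram (an oriented generic immersed circle in the plane whose double points are either classical crossings, carrying over/under information, or virtual crossings, carrying none) which may in addition carry finitely many bars: short segments marked transversally on arcs, away from crossings. Gauss diagram of a twisted knot diagram: an oriented circle (the parametrizing circle of the knot) on which are marked, in the order met when traversing the knot from a basepoint, the two preimages of each classical crossing and one point for each bar. For each classical crossing a chord joins its two preimages, oriented from the overcrossing preimage (the arrowtail) to the undercrossing preimage (the arrowhead), and labelled by the sign $\varepsilon\in\{+,-\}$ of the crossing. Virtual crossings are not recorded. Two marked points (chord endpoints or bars) are called adjacent if no other marked point lies between them on the circle. Moves on Gauss diagrams (each may be applied in either direction): - $T2$: add or remove two adjacent bars. - $T3$: if each endpoint of a chord is immediately preceded and immediately followed by a bar, remove these four bars, reverse the orientation of the chord and change its sign (the Gauss-diagram version of the twisted Reidemeister move in which a classical crossing having a bar on each of its four incident arcs next to the crossing is replaced by the crossing with over- and under-strand exchanged, the four bars being removed). - $F1$: exchange the positions of two adjacent arrowheads of different chords (signs arbitrary). - $F2$: exchange the positions of two adjacent arrowtails of different chords (signs arbitrary). *)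

theory Defs
  imports Main
begin

text \<open>A Gauss diagram of a twisted knot diagram is encoded as the cyclic word of marked
points met along the parametrizing circle, read from some basepoint.  A marked point is a
bar, or the arrowtail / arrowhead of the chord with label c and sign s (True = +).
Changing the basepoint (rotating the word) gives the same Gauss diagram.\<close>

datatype mark = Bar | Tl nat bool | Hd nat bool

fun is_end_of :: "nat \<Rightarrow> mark \<Rightarrow> bool" where
  "is_end_of c Bar = False"
| "is_end_of c (Tl d s) = (c = d)"
| "is_end_of c (Hd d s) = (c = d)"

definition chords :: "mark list \<Rightarrow> nat set" where
  "chords D = {c. \<exists>m\<in>set D. is_end_of c m}"

definition gauss_diagram :: "mark list \<Rightarrow> bool" where
  "gauss_diagram D \<longleftrightarrow> (\<forall>c\<in>chords D. length (filter (is_end_of c) D) = 2 \<and>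
      (\<exists>s. Tl c s \<in> set D \<and> Hd c s \<in> set D))"

definition rot :: "mark list \<Rightarrow> mark list \<Rightarrow> bool" where
  "rot D D' \<longleftrightarrow> (\<exists>k. D' = rotate k D)"

text \<open>Local moves on a linear reading of the word (adjacency across the basepoint is handled
by first rotating, see cyc).\<close>

definition T2_add :: "mark list \<Rightarrow> mark list \<Rightarrow> bool" where
  "T2_add D D' \<longleftrightarrow> (\<exists>u v. D = u @ v \<and> D' = u @ [Bar, Bar] @ v)"

definition T2 :: "mark list \<Rightarrow> mark list \<Rightarrow> bool" where
  "T2 D D' \<longleftrightarrow> T2_add D D' \<or> T2_add D' D"

definition T3_fwd :: "mark list \<Rightarrow> mark list \<Rightarrow> bool" where
  "T3_fwd D D' \<longleftrightarrow> (\<exists>u v w c s.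
     (D = u @ [Bar, Tl c s, Bar] @ v @ [Bar, Hd c s, Bar] @ w \<and>
      D' = u @ [Hd c (\<not> s)] @ v @ [Tl c (\<not> s)] @ w) \<or>
     (D = u @ [Bar, Hd c s, Bar] @ v @ [Bar, Tl c s, Bar] @ w \<and>
      D' = u @ [Tl c (\<not> s)] @ v @ [Hd c (\<not> s)] @ w))"

definition T3 :: "mark list \<Rightarrow> mark list \<Rightarrow> bool" where
  "T3 D D' \<longleftrightarrow> T3_fwd D D' \<or> T3_fwd D' D"

definition F1 :: "mark list \<Rightarrow> mark list \<Rightarrow> bool" where
  "F1 D D' \<longleftrightarrow> (\<exists>u v a b s t. a \<noteq> b \<and>
     D = u @ [Hd a s, Hd b t] @ v \<and> D' = u @ [Hd b t, Hd a s] @ v)"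

definition F2 :: "mark list \<Rightarrow> mark list \<Rightarrow> bool" where
  "F2 D D' \<longleftrightarrow> (\<exists>u v a b s t. a \<noteq> b \<and>
     D = u @ [Tl a s, Tl b t] @ v \<and> D' = u @ [Tl b t, Tl a s] @ v)"

definition cyc :: "(mark list \<Rightarrow> mark list \<Rightarrow> bool) \<Rightarrow> mark list \<Rightarrow> mark list \<Rightarrow> bool" where
  "cyc R D D' \<longleftrightarrow> (\<exists>k. R (rotate k D) D')"

definition moves :: "(mark list \<Rightarrow> mark list \<Rightarrow> bool) list \<Rightarrow> mark list \<Rightarrow> mark list \<Rightarrow> bool" where
  "moves Rs = (\<lambda>x y. rot x y \<or> (\<exists>R\<in>set Rs. cyc R x y))\<^sup>*\<^sup>*"

end

theory Submission
  imports Defs "HOL-Library.Multiset"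
begin

text \<open>Adding bars by T2 next to both endpoints of a chord lets T3 reverse the chord, turning its
head into a tail.  Two adjacent heads thus become two tails, adjacent up to a pair of bars removed
by T2; these are exchanged by F2, and both chords are reversed back.  Reversing every chord of a
diagram exchanges F1 with F2 and preserves T2 and T3, so the realization of F2 is the mirror image
of that of F1.  All moves keep Gauss diagrams Gauss diagrams, so every forbidden move in a sequence
can be replaced by its realization.\<close>

definition chord_ends :: "nat \<Rightarrow> mark list \<Rightarrow> mark multiset" where
  "chord_ends c D = mset (filter (is_end_of c) D)"

lemma chord_ends_append [simp]: "chord_ends c (xs @ ys) = chord_ends c xs + chord_ends c ys"
  by (simp add: chord_ends_def)

lemma chord_ends_Cons [simp]:
  "chord_ends c (m # xs) = (if is_end_of c m then add_mset m (chord_ends c xs) else chord_ends c xs)"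
  by (simp add: chord_ends_def)

lemma chord_ends_Nil [simp]: "chord_ends c [] = {#}"
  by (simp add: chord_ends_def)

lemma mem_chord_ends_iff: "m \<in># chord_ends c D \<longleftrightarrow> m \<in> set D \<and> is_end_of c m"
  by (simp add: chord_ends_def)

definition proper_chord_ends :: "nat \<Rightarrow> mark multiset \<Rightarrow> bool" where
  "proper_chord_ends c M \<longleftrightarrow> M = {#} \<or> (\<exists>s. M = {#Tl c s, Hd c s#})"

lemma gauss_diagram_iff_chord_ends:
  "gauss_diagram D \<longleftrightarrow> (\<forall>c. proper_chord_ends c (chord_ends c D))"
proof -
  have chord_iff: "c \<in> chords D \<longleftrightarrow> chord_ends c D \<noteq> {#}" for c
    by (auto simp: chords_def chord_ends_def filter_empty_conv)
  have pair_iff: "(length (filter (is_end_of c) D) = 2 \<and> (\<exists>s. Tl c s \<in> set D \<and> Hd c s \<in> set D))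
      \<longleftrightarrow> (\<exists>s. chord_ends c D = {#Tl c s, Hd c s#})" for c
  proof
    assume "length (filter (is_end_of c) D) = 2 \<and> (\<exists>s. Tl c s \<in> set D \<and> Hd c s \<in> set D)"
    then obtain x y s where xy: "filter (is_end_of c) D = [x, y]"
      and "Tl c s \<in> set D" "Hd c s \<in> set D"
      by (auto simp: numeral_2_eq_2 length_Suc_conv)
    then have "Tl c s \<in> set [x, y]" "Hd c s \<in> set [x, y]"
      unfolding xy[symmetric] by simp_all
    then have "{#x, y#} = {#Tl c s, Hd c s#}" by auto
    with xy show "\<exists>s. chord_ends c D = {#Tl c s, Hd c s#}"
      by (auto simp: chord_ends_def)
  next
    assume "\<exists>s. chord_ends c D = {#Tl c s, Hd c s#}"
    then obtain s where e: "chord_ends c D = {#Tl c s, Hd c s#}" by blast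
    then have "length (filter (is_end_of c) D) = 2"
      by (metis chord_ends_def size_mset size_add_mset size_empty numeral_2_eq_2)
    moreover have "Tl c s \<in> set D" "Hd c s \<in> set D"
      using e mem_chord_ends_iff[of _ c D] by auto
    ultimately show "length (filter (is_end_of c) D) = 2 \<and> (\<exists>s. Tl c s \<in> set D \<and> Hd c s \<in> set D)"
      by blast
  qed
  show ?thesis
    unfolding gauss_diagram_def proper_chord_ends_def pair_iff Ball_def chord_iff by blast
qed

lemma gauss_diagram_mset_cong:
  assumes "mset D = mset D'"
  shows "gauss_diagram D \<longleftrightarrow> gauss_diagram D'"
proof -
  have "chord_ends c D = chord_ends c D'" for c
    using assms by (metis chord_ends_def mset_filter)
  then show ?thesis
    unfolding gauss_diagram_iff_chord_ends by simp
qed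

lemma mset_rotate [simp]: "mset (rotate n xs) = mset xs"
  by (metis rotate_drop_take append_take_drop_id mset_append add.commute)

lemma gauss_diagram_rotate [simp]: "gauss_diagram (rotate n D) \<longleftrightarrow> gauss_diagram D"
  by (rule gauss_diagram_mset_cong) simp

lemma gauss_diagram_tail_of_head:
  assumes "gauss_diagram D" and "Hd c s \<in> set D"
  shows "Tl c s \<in> set D"
proof -
  have hd: "Hd c s \<in># chord_ends c D"
    using assms(2) by (simp add: mem_chord_ends_iff)
  then have "chord_ends c D \<noteq> {#}" by auto
  then obtain s' where e: "chord_ends c D = {#Tl c s', Hd c s'#}"
    using assms(1) unfolding gauss_diagram_iff_chord_ends proper_chord_ends_def by blast
  with hd have "s' = s" by auto
  with e have "Tl c s \<in># chord_ends c D" by simp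
  then show ?thesis by (simp add: mem_chord_ends_iff)
qed

text \<open>The condition does not see the sign of the chord; this is why T3 preserves Gauss diagrams.\<close>
lemma proper_chord_ends_add_pair: "proper_chord_ends c (E + {#Tl c s, Hd c s#}) \<longleftrightarrow> E = {#}"
proof
  assume "proper_chord_ends c (E + {#Tl c s, Hd c s#})"
  then obtain s' where "E + {#Tl c s, Hd c s#} = {#Tl c s', Hd c s'#}"
    unfolding proper_chord_ends_def by auto
  then have "size (E + {#Tl c s, Hd c s#}) = size {#Tl c s', Hd c s'#}" by (rule arg_cong)
  then show "E = {#}" by simp
qed (auto simp: proper_chord_ends_def)

lemma gauss_diagram_T3_fwd:
  assumes "T3_fwd D D'"
  shows "gauss_diagram D \<longleftrightarrow> gauss_diagram D'"
proof -
  from assms obtain u v w c s where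
    "D = u @ [Bar, Tl c s, Bar] @ v @ [Bar, Hd c s, Bar] @ w \<and>
     D' = u @ [Hd c (\<not> s)] @ v @ [Tl c (\<not> s)] @ w \<or>
     D = u @ [Bar, Hd c s, Bar] @ v @ [Bar, Tl c s, Bar] @ w \<and>
     D' = u @ [Tl c (\<not> s)] @ v @ [Hd c (\<not> s)] @ w"
    unfolding T3_fwd_def by blast
  then have ends: "chord_ends c D = chord_ends c (u @ v @ w) + {#Tl c s, Hd c s#}"
      "chord_ends c D' = chord_ends c (u @ v @ w) + {#Tl c (\<not> s), Hd c (\<not> s)#}"
    and others: "\<And>d. d \<noteq> c \<Longrightarrow> chord_ends d D = chord_ends d D'"
    by auto
  have "proper_chord_ends d (chord_ends d D) \<longleftrightarrow> proper_chord_ends d (chord_ends d D')" for d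
    by (cases "d = c") (simp_all only: ends proper_chord_ends_add_pair, simp add: others)
  then show ?thesis
    unfolding gauss_diagram_iff_chord_ends by blast
qed

lemma gauss_diagram_move:
  assumes "R \<in> {F1, F2, T2, T3}" and "R D D'"
  shows "gauss_diagram D \<longleftrightarrow> gauss_diagram D'"
  using assms(1)
proof (elim insertE emptyE)
  assume "R = F1"
  with assms(2) have "mset D = mset D'"
    unfolding F1_def by (auto simp: add_mset_commute)
  then show ?thesis by (rule gauss_diagram_mset_cong)
next
  assume "R = F2"
  with assms(2) have "mset D = mset D'"
    unfolding F2_def by (auto simp: add_mset_commute)
  then show ?thesis by (rule gauss_diagram_mset_cong)
next
  assume "R = T2"
  with assms(2) have "chord_ends c D = chord_ends c D'" for c
    unfolding T2_def T2_add_def by auto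
  then show ?thesis
    unfolding gauss_diagram_iff_chord_ends by simp
next
  assume "R = T3"
  with assms(2) show ?thesis
    unfolding T3_def using gauss_diagram_T3_fwd by blast
qed

lemma moves_trans [trans]: "moves Rs x y \<Longrightarrow> moves Rs y z \<Longrightarrow> moves Rs x z"
  unfolding moves_def by (rule rtranclp_trans)

lemma moves_cyc: "R \<in> set Rs \<Longrightarrow> cyc R x y \<Longrightarrow> moves Rs x y"
  unfolding moves_def by (rule r_into_rtranclp) blast

lemma moves_move: "R \<in> set Rs \<Longrightarrow> R x y \<Longrightarrow> moves Rs x y"
  by (rule moves_cyc) (auto simp: cyc_def intro: exI[of _ 0])

lemma moves_swap_append: "moves Rs (u @ v) (v @ u)"
  unfolding moves_def rot_def by (rule r_into_rtranclp) (metis rotate_append)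

lemma moves_rotate: "moves Rs x (rotate n x)"
  by (metis append_take_drop_id moves_swap_append rotate_drop_take)

lemma moves_unrotate: "moves Rs (rotate n x) x"
  by (metis append_take_drop_id moves_swap_append rotate_drop_take)

lemma moves_sym:
  assumes "\<forall>R\<in>set Rs. symp R" and "moves Rs x y"
  shows "moves Rs y x"
proof -
  have step_back: "moves Rs y x" if "rot x y \<or> (\<exists>R\<in>set Rs. cyc R x y)" for x y
    using that
  proof
    assume "rot x y"
    then show ?thesis
      unfolding rot_def using moves_unrotate by blast
  next
    assume "\<exists>R\<in>set Rs. cyc R x y"
    then obtain R n where "R \<in> set Rs" "R (rotate n x) y"
      unfolding cyc_def by blast
    with assms(1) have "moves Rs y (rotate n x)"
      by (metis moves_move sympD)
    also have "moves Rs (rotate n x) x"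
      by (rule moves_unrotate)
    finally show ?thesis .
  qed
  from assms(2) show ?thesis
    unfolding moves_def
  proof (induction rule: rtranclp_induct)
    case (step y z)
    from step.hyps(2) have "moves Rs z y" by (rule step_back)
    with step.IH show ?case
      unfolding moves_def by (rule rtranclp_trans[rotated])
  qed simp
qed

lemma moves_add_bars: "T2 \<in> set Rs \<Longrightarrow> moves Rs (u @ v) (u @ Bar # Bar # v)"
  by (rule moves_move[of T2]) (auto simp: T2_def T2_add_def)

lemma moves_remove_bars: "T2 \<in> set Rs \<Longrightarrow> moves Rs (u @ Bar # Bar # v) (u @ v)"
  by (rule moves_move[of T2]) (auto simp: T2_def T2_add_def)

lemma moves_T3_head_first:
  assumes "T3 \<in> set Rs"
  shows "moves Rs (u @ [Bar, Hd c s, Bar] @ v @ [Bar, Tl c s, Bar] @ w)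
                  (u @ [Tl c (\<not> s)] @ v @ [Hd c (\<not> s)] @ w)"
  using assms by (rule moves_move) (unfold T3_def T3_fwd_def, blast)

lemma moves_twist_chord:
  assumes "T2 \<in> set Rs" "T3 \<in> set Rs"
  shows "moves Rs (u @ Hd c s # v @ Tl c s # w)
                  (u @ Bar # Tl c (\<not> s) # Bar # v @ Bar # Hd c (\<not> s) # Bar # w)"
proof -
  have "moves Rs (u @ Hd c s # v @ Tl c s # w) (u @ Bar # Bar # Hd c s # v @ Tl c s # w)"
    using moves_add_bars[OF assms(1), of u] by simp
  also have "moves Rs \<dots> (u @ [Bar, Bar, Hd c s, Bar, Bar] @ v @ Tl c s # w)"
    using moves_add_bars[OF assms(1), of "u @ [Bar, Bar, Hd c s]"] by simp
  also have "moves Rs \<dots> (u @ [Bar, Bar, Hd c s, Bar, Bar] @ v @ [Bar, Bar, Tl c s] @ w)"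
    using moves_add_bars[OF assms(1), of "u @ [Bar, Bar, Hd c s, Bar, Bar] @ v"] by simp
  also have "moves Rs \<dots> (u @ [Bar, Bar, Hd c s, Bar, Bar] @ v @ [Bar, Bar, Tl c s, Bar, Bar] @ w)"
    using moves_add_bars[OF assms(1), of "u @ [Bar, Bar, Hd c s, Bar, Bar] @ v @ [Bar, Bar, Tl c s]"]
    by simp
  also have "moves Rs \<dots> (u @ Bar # Tl c (\<not> s) # Bar # v @ Bar # Hd c (\<not> s) # Bar # w)"
    using moves_T3_head_first[OF assms(2), of "u @ [Bar]" c s "Bar # v @ [Bar]" "Bar # w"] by simp
  finally show ?thesis by simp
qed

lemma moves_F2:
  assumes "F2 \<in> set Rs" and "a \<noteq> b"
  shows "moves Rs (u @ [Tl a s, Tl b t] @ v) (u @ [Tl b t, Tl a s] @ v)"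
  using assms(1) by (rule moves_move) (use assms(2) in \<open>unfold F2_def, blast\<close>)

lemma symp_F2: "symp F2"
proof (rule sympI)
  fix D D' assume "F2 D D'"
  then obtain u v a b s t where "a \<noteq> b"
    and "D = u @ [Tl a s, Tl b t] @ v" "D' = u @ [Tl b t, Tl a s] @ v"
    unfolding F2_def by blast
  then show "F2 D' D"
    unfolding F2_def by (intro exI[of _ u] exI[of _ v] exI[of _ b] exI[of _ a]) auto
qed

lemma symp_T2: "symp T2"
  unfolding T2_def by (rule sympI) blast

lemma symp_T3: "symp T3"
  unfolding T3_def by (rule sympI) blast

lemma symp_F2_T2_T3: "\<forall>R\<in>set [F2, T2, T3]. symp R"
  using symp_F2 symp_T2 symp_T3 by simp

text \<open>Reverse both chords, exchange their (now adjacent) tails by F2, and reverse them back.\<close>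
lemma moves_swap_heads_twisting:
  assumes "a \<noteq> b"
  shows "moves [F2, T2, T3] ([Hd a s, Hd b t] @ p @ Tl a s # q @ Tl b t # r)
                            ([Hd b t, Hd a s] @ p @ Tl a s # q @ Tl b t # r)"
proof -
  let ?R = "[F2, T2, T3]"
  let ?W = "p @ Bar # Hd a (\<not> s) # Bar # q @ Bar # Hd b (\<not> t) # Bar # r"
  have T2: "T2 \<in> set ?R" and T3: "T3 \<in> set ?R" and F2: "F2 \<in> set ?R" by simp_all
  have "moves ?R ([Hd a s, Hd b t] @ p @ Tl a s # q @ Tl b t # r)
            (Bar # Tl a (\<not> s) # Bar # Hd b t # p @ Bar # Hd a (\<not> s) # Bar # q @ Tl b t # r)"
    using moves_twist_chord[OF T2 T3, of "[]" a s "Hd b t # p" "q @ Tl b t # r"] by simp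
  also have "moves ?R \<dots> ([Bar, Tl a (\<not> s), Bar, Bar, Tl b (\<not> t), Bar] @ ?W)"
    using moves_twist_chord[OF T2 T3, of "[Bar, Tl a (\<not> s), Bar]" b t
        "p @ Bar # Hd a (\<not> s) # Bar # q" r]
    by simp
  also have "moves ?R \<dots> ([Bar, Tl a (\<not> s), Tl b (\<not> t), Bar] @ ?W)"
    using moves_remove_bars[OF T2, of "[Bar, Tl a (\<not> s)]"] by simp
  also have "moves ?R \<dots> ([Bar, Tl b (\<not> t), Tl a (\<not> s), Bar] @ ?W)"
    using moves_F2[OF F2 assms, of "[Bar]" "\<not> s" "\<not> t" "Bar # ?W"] by simp
  also have "moves ?R \<dots> ([Bar, Tl b (\<not> t), Bar, Bar, Tl a (\<not> s), Bar] @ ?W)"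
    using moves_add_bars[OF T2, of "[Bar, Tl b (\<not> t)]"] by simp
  also have "moves ?R \<dots> ([Hd b t, Hd a s] @ p @ Tl a s # q @ Tl b t # r)"
  proof (rule moves_sym)
    show "\<forall>R\<in>set ?R. symp R"
      by (rule symp_F2_T2_T3)
    have "moves ?R ([Hd b t, Hd a s] @ p @ Tl a s # q @ Tl b t # r)
              (Hd b t # Bar # Tl a (\<not> s) # Bar # p @ Bar # Hd a (\<not> s) # Bar # q @ Tl b t # r)"
      using moves_twist_chord[OF T2 T3, of "[Hd b t]" a s p "q @ Tl b t # r"] by simp
    also have "moves ?R \<dots> ([Bar, Tl b (\<not> t), Bar, Bar, Tl a (\<not> s), Bar] @ ?W)"
      using moves_twist_chord[OF T2 T3, of "[]" b t
          "Bar # Tl a (\<not> s) # Bar # p @ Bar # Hd a (\<not> s) # Bar # q" r]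
      by simp
    finally show "moves ?R ([Hd b t, Hd a s] @ p @ Tl a s # q @ Tl b t # r)
                           ([Bar, Tl b (\<not> t), Bar, Bar, Tl a (\<not> s), Bar] @ ?W)" .
  qed
  finally show ?thesis .
qed

lemma moves_swap_adjacent_heads:
  assumes "a \<noteq> b" and "Tl a s \<in> set w" "Tl b t \<in> set w"
  shows "moves [F2, T2, T3] ([Hd a s, Hd b t] @ w) ([Hd b t, Hd a s] @ w)"
proof -
  obtain w1 w2 where w: "w = w1 @ Tl a s # w2"
    using assms(2) split_list by metis
  have "Tl b t \<in> set w2 \<or> Tl b t \<in> set w1"
    using assms(1,3) w by auto
  then show ?thesis
  proof
    assume "Tl b t \<in> set w2"
    then obtain q r where "w2 = q @ Tl b t # r"
      using split_list by metis
    with w show ?thesis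
      using moves_swap_heads_twisting[OF assms(1)] by simp
  next
    assume "Tl b t \<in> set w1"
    then obtain p q where "w1 = p @ Tl b t # q"
      using split_list by metis
    with w have "moves [F2, T2, T3] ([Hd b t, Hd a s] @ w) ([Hd a s, Hd b t] @ w)"
      using moves_swap_heads_twisting[of b a t s p q w2] assms(1) by simp
    with symp_F2_T2_T3 show ?thesis
      by (rule moves_sym)
  qed
qed

lemma moves_F1_by_F2_T2_T3:
  assumes "gauss_diagram D" and "cyc F1 D D'"
  shows "moves [F2, T2, T3] D D'"
proof -
  obtain n u v a b s t where "a \<noteq> b" and D: "rotate n D = u @ [Hd a s, Hd b t] @ v"
    and D': "D' = u @ [Hd b t, Hd a s] @ v"
    using assms(2) unfolding cyc_def F1_def by blast
  let ?E = "[Hd a s, Hd b t] @ v @ u"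
  have "?E = rotate (length u) (rotate n D)"
    unfolding D by (metis append.assoc rotate_append)
  with assms(1) have "gauss_diagram ?E"
    by simp
  then have "Tl a s \<in> set (v @ u)" "Tl b t \<in> set (v @ u)"
    using gauss_diagram_tail_of_head[of ?E] by auto
  have "moves [F2, T2, T3] D (u @ [Hd a s, Hd b t] @ v)"
    using moves_rotate D by metis
  also have "moves [F2, T2, T3] \<dots> ?E"
    using moves_swap_append[of _ u "[Hd a s, Hd b t] @ v"] by simp
  also have "moves [F2, T2, T3] \<dots> ([Hd b t, Hd a s] @ v @ u)"
    using moves_swap_adjacent_heads[OF \<open>a \<noteq> b\<close>] \<open>Tl a s \<in> set (v @ u)\<close> \<open>Tl b t \<in> set (v @ u)\<close> .
  also have "moves [F2, T2, T3] \<dots> D'"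
    unfolding D' using moves_swap_append[of _ "[Hd b t, Hd a s] @ v" u] by simp
  finally show ?thesis .
qed

fun reverse_chord :: "mark \<Rightarrow> mark" where
  "reverse_chord Bar = Bar"
| "reverse_chord (Tl c s) = Hd c s"
| "reverse_chord (Hd c s) = Tl c s"

lemma reverse_chord_reverse_chord [simp]: "reverse_chord (reverse_chord m) = m"
  by (cases m) simp_all

lemma is_end_of_reverse_chord [simp]: "is_end_of c (reverse_chord m) = is_end_of c m"
  by (cases m) simp_all

lemma gauss_diagram_map_reverse_chord:
  assumes "gauss_diagram D"
  shows "gauss_diagram (map reverse_chord D)"
  unfolding gauss_diagram_iff_chord_ends
proof
  fix c
  have ends: "chord_ends c (map reverse_chord D) = image_mset reverse_chord (chord_ends c D)"
    by (simp add: chord_ends_def filter_map comp_def)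
  from assms have "proper_chord_ends c (chord_ends c D)"
    unfolding gauss_diagram_iff_chord_ends ..
  then show "proper_chord_ends c (chord_ends c (map reverse_chord D))"
    unfolding ends proper_chord_ends_def by (auto simp: add_mset_commute)
qed

lemma F2_map_reverse_chord:
  assumes "F2 x y"
  shows "F1 (map reverse_chord x) (map reverse_chord y)"
proof -
  obtain u v a b s t where "a \<noteq> b"
    and "x = u @ [Tl a s, Tl b t] @ v" "y = u @ [Tl b t, Tl a s] @ v"
    using assms unfolding F2_def by blast
  then show ?thesis
    unfolding F1_def
    by (intro exI[of _ "map reverse_chord u"] exI[of _ "map reverse_chord v"] exI[of _ a] exI[of _ b]
        exI[of _ s] exI[of _ t]) simp
qed

lemma T2_add_map_reverse_chord:
  assumes "T2_add x y"
  shows "T2_add (map reverse_chord x) (map reverse_chord y)"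
proof -
  obtain u v where "x = u @ v" "y = u @ [Bar, Bar] @ v"
    using assms unfolding T2_add_def by blast
  then show ?thesis
    unfolding T2_add_def by (intro exI[of _ "map reverse_chord u"] exI[of _ "map reverse_chord v"]) simp
qed

lemma T2_map_reverse_chord: "T2 x y \<Longrightarrow> T2 (map reverse_chord x) (map reverse_chord y)"
  unfolding T2_def using T2_add_map_reverse_chord by blast

lemma T3_fwd_map_reverse_chord:
  assumes "T3_fwd x y"
  shows "T3_fwd (map reverse_chord x) (map reverse_chord y)"
proof -
  obtain u v w c s where
    "x = u @ [Bar, Tl c s, Bar] @ v @ [Bar, Hd c s, Bar] @ w \<and>
     y = u @ [Hd c (\<not> s)] @ v @ [Tl c (\<not> s)] @ w \<or>
     x = u @ [Bar, Hd c s, Bar] @ v @ [Bar, Tl c s, Bar] @ w \<and>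
     y = u @ [Tl c (\<not> s)] @ v @ [Hd c (\<not> s)] @ w"
    using assms unfolding T3_fwd_def by blast
  then show ?thesis
    unfolding T3_fwd_def
    by (intro exI[of _ "map reverse_chord u"] exI[of _ "map reverse_chord v"]
        exI[of _ "map reverse_chord w"] exI[of _ c] exI[of _ s]) auto
qed

lemma T3_map_reverse_chord: "T3 x y \<Longrightarrow> T3 (map reverse_chord x) (map reverse_chord y)"
  unfolding T3_def using T3_fwd_map_reverse_chord by blast

lemma cyc_map:
  assumes "\<And>x y. R x y \<Longrightarrow> R' (map f x) (map f y)" and "cyc R x y"
  shows "cyc R' (map f x) (map f y)"
  using assms unfolding cyc_def by (metis rotate_map)

lemma moves_map:
  assumes "\<And>R. R \<in> set Rs \<Longrightarrow> \<exists>R'\<in>set Rs'. \<forall>x y. R x y \<longrightarrow> R' (map f x) (map f y)"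
    and "moves Rs x y"
  shows "moves Rs' (map f x) (map f y)"
  using assms(2) unfolding moves_def
proof (induction rule: rtranclp_induct)
  case (step y z)
  from step.hyps(2) have "rot (map f y) (map f z) \<or> (\<exists>R'\<in>set Rs'. cyc R' (map f y) (map f z))"
  proof
    assume "rot y z"
    then show ?thesis
      unfolding rot_def by (metis rotate_map)
  next
    assume "\<exists>R\<in>set Rs. cyc R y z"
    then obtain R where "R \<in> set Rs" "cyc R y z" ..
    with assms(1) show ?thesis
      using cyc_map by meson
  qed
  with step.IH show ?case
    by (rule rtranclp.rtrancl_into_rtrancl)
qed simp

lemma moves_F2_by_F1_T2_T3:
  assumes "gauss_diagram D" and "cyc F2 D D'"
  shows "moves [F1, T2, T3] D D'"
proof -
  have "cyc F1 (map reverse_chord D) (map reverse_chord D')"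
    using assms(2) F2_map_reverse_chord by (rule cyc_map[rotated])
  with assms(1) have "moves [F2, T2, T3] (map reverse_chord D) (map reverse_chord D')"
    by (intro moves_F1_by_F2_T2_T3 gauss_diagram_map_reverse_chord)
  then have "moves [F1, T2, T3] (map reverse_chord (map reverse_chord D))
                                (map reverse_chord (map reverse_chord D'))"
    by (rule moves_map[rotated])
      (auto intro: F2_map_reverse_chord T2_map_reverse_chord T3_map_reverse_chord)
  then show ?thesis
    by (simp add: comp_def)
qed

lemma gauss_diagram_cyc:
  assumes "R \<in> {F1, F2, T2, T3}" and "cyc R D D'" and "gauss_diagram D"
  shows "gauss_diagram D'"
proof -
  obtain n where "R (rotate n D) D'"
    using assms(2) unfolding cyc_def ..
  with assms(1,3) show ?thesis
    using gauss_diagram_move gauss_diagram_rotate by blast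
qed

lemma moves_replace:
  assumes "set Rs \<subseteq> {F1, F2, T2, T3}"
    and "\<And>R x y. R \<in> set Rs \<Longrightarrow> gauss_diagram x \<Longrightarrow> cyc R x y \<Longrightarrow> moves Rs' x y"
    and "moves Rs D D'" and "gauss_diagram D"
  shows "moves Rs' D D'"
proof -
  from assms(3)[unfolded moves_def] have "moves Rs' D D' \<and> gauss_diagram D'"
  proof (induction rule: rtranclp_induct)
    case base
    with assms(4) show ?case
      by (simp add: moves_def)
  next
    case (step y z)
    then have y: "moves Rs' D y" "gauss_diagram y"
      by simp_all
    from step.hyps(2) show ?case
    proof
      assume "rot y z"
      then obtain n where "z = rotate n y"
        unfolding rot_def ..
      with y show ?thesis
        using moves_rotate moves_trans by auto
    next
      assume "\<exists>R\<in>set Rs. cyc R y z"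
      then obtain R where "R \<in> set Rs" "cyc R y z" ..
      with y assms(1,2) show ?thesis
        using gauss_diagram_cyc moves_trans by blast
    qed
  qed
  then show ?thesis ..
qed

theorem mainTheorem3:
  shows "(\<forall>D D'. gauss_diagram D \<longrightarrow> cyc F1 D D' \<longrightarrow> moves [F2, T2, T3] D D') \<and>
         (\<forall>D D'. gauss_diagram D \<longrightarrow> cyc F2 D D' \<longrightarrow> moves [F1, T2, T3] D D') \<and>
         (\<forall>D D'. gauss_diagram D \<longrightarrow>
            (moves [F1, T2, T3] D D' \<longleftrightarrow> moves [F2, T2, T3] D D'))"
proof (intro conjI allI impI)
  fix D D'
  assume D: "gauss_diagram D"
  show "cyc F1 D D' \<Longrightarrow> moves [F2, T2, T3] D D'"
    using D moves_F1_by_F2_T2_T3 by blast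
  show "cyc F2 D D' \<Longrightarrow> moves [F1, T2, T3] D D'"
    using D moves_F2_by_F1_T2_T3 by blast
  show "moves [F1, T2, T3] D D' \<longleftrightarrow> moves [F2, T2, T3] D D'"
  proof
    assume "moves [F1, T2, T3] D D'"
    then show "moves [F2, T2, T3] D D'"
      using D by (rule moves_replace[rotated 2]) (auto intro: moves_F1_by_F2_T2_T3 moves_cyc)
  next
    assume "moves [F2, T2, T3] D D'"
    then show "moves [F1, T2, T3] D D'"
      using D by (rule moves_replace[rotated 2]) (auto intro: moves_F2_by_F1_T2_T3 moves_cyc)
  qed
qed

end
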